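(* Let $a>0$ and let $\mu_p$ be the Poisson measure on $\mathbb{R}$ with parameter $a$. Let $\lambda_n=a^nn!$ and let $\mathcal{H}_\lambda$ be the Hilbert space of entire functions $F(z)=\sum_{n\ge0}a_nz^n$ with $\sum_{n\ge0}\lambda_n|a_n|^2<\infty$, normed by $\|F\|_{\mathcal{H}_\lambda}^2=\sum_{n\ge0}\lambda_n|a_n|^2$. Then there exists a unique measure $\widetilde\mu$ on $\mathbb{C}$ such that $\mathcal{H}_\lambda=\mathcal{H}L^2(\mathbb{C},\widetilde\mu)$, i.e. an entire function $F$ belongs to $\mathcal{H}_\lambda$ if and only if $F\in L^2(\mathbb{C},\widetilde\mu)$, and in that case $\|F\|_{\mathcal{H}_\lambda}^2=\int_{\mathbb{C}}|F(z)|^2\,d\widetilde\mu(z)$.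
   Context: The Poisson measure with parameter $a$ is $\mu_p=\sum_{k\ge0}e^{-a}\frac{a^k}{k!}\delta_k$. $\mathcal{H}L^2(\mathbb{C},\widetilde\mu)$ denotes the space of entire functions on $\mathbb{C}$ that are square integrable with respect to $\widetilde\mu$, with the $L^2(\widetilde\mu)$-norm. The sequence $\lambda_n=a^nn!$ is the sequence of squared norms $\int P_n^2\,d\mu_p$ of the monic orthogonal (Charlier) polynomials $P_n$ of $\mu_p$. *)

theory Defs
  imports "HOL-Complex_Analysis.Complex_Analysis"
begin

text \<open>The weight sequence lambda_n = a^n n! (squared norms of the monic Charlier polynomials).\<close>
definition lambda_seq :: "real \<Rightarrow> nat \<Rightarrow> real" where
  "lambda_seq a n = a ^ n * fact n"

definition taylor_coeff :: "(complex \<Rightarrow> complex) \<Rightarrow> nat \<Rightarrow> complex" where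
  "taylor_coeff F n = (deriv ^^ n) F 0 / fact n"

definition in_H_lambda :: "(nat \<Rightarrow> real) \<Rightarrow> (complex \<Rightarrow> complex) \<Rightarrow> bool" where
  "in_H_lambda lam F \<longleftrightarrow> F holomorphic_on UNIV \<and>
     summable (\<lambda>n. lam n * (cmod (taylor_coeff F n))\<^sup>2)"

definition H_lambda_norm_sq :: "(nat \<Rightarrow> real) \<Rightarrow> (complex \<Rightarrow> complex) \<Rightarrow> real" where
  "H_lambda_norm_sq lam F = (\<Sum>n. lam n * (cmod (taylor_coeff F n))\<^sup>2)"

end

theory Submission
  imports Defs "HOL-Probability.Probability"
begin

text \<open>
  The measure is the Gaussian measure \<open>exp (-\<bar>z\<bar>^2 / a) dA(z) / (\<pi> a)\<close>. In the
  coordinates \<open>z = sqrt (a s) e^(i t)\<close> it becomes \<open>e^(-s) ds dt / (2 \<pi>)\<close> on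
  \<open>[0, \<infinity>) \<times> [-\<pi>, \<pi>]\<close>, so Parseval's identity on the circle of radius \<open>sqrt (a s)\<close>
  together with \<open>\<integral> s^n e^(-s) ds = n!\<close> gives \<open>\<integral> \<bar>F\<bar>^2 = \<Sum> a^n n! \<bar>a\<^sub>n\<bar>^2\<close>.

  Uniqueness: a representing measure is finite (take \<open>F = 1\<close>), and its Fourier transform
  is determined by norms in \<open>H\<^sub>\<lambda>\<close>: for \<open>u = i cnj w / 2\<close> we have
  \<open>e^(i \<langle>w, z\<rangle>) = e^(u z) cnj (e^(-u z))\<close>, which by polarization is a combination of the
  functions \<open>\<bar>e^(u z) + c e^(-u z)\<bar>^2\<close>, \<open>c \<in> {1, -1, i, -i}\<close>. Finite Borel measures on
  \<open>\<complex>\<close> with the same Fourier transform are equal; this is reduced to Levy's one-dimensional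
  uniqueness theorem, applied first to the images under \<open>Im\<close> of the measures weighted by
  functions of \<open>Re\<close>, and then to the images under \<open>Re\<close> of their restrictions to the
  strips \<open>Im z \<in> B\<close>.
\<close>

section \<open>Parseval's identity on circles\<close>

lemma entire_taylor_series_sums:
  assumes "F holomorphic_on UNIV"
  shows "(\<lambda>n. taylor_coeff F n * z^n) sums F z"
proof -
  have "F holomorphic_on ball 0 (norm z + 1)" using assms by (rule holomorphic_on_subset) auto
  from holomorphic_power_series[OF this, of z] show ?thesis
    by (simp add: taylor_coeff_def)
qed

lemma entire_taylor_series_abs_summable:
  assumes "F holomorphic_on UNIV"
  shows "summable (\<lambda>n. norm (taylor_coeff F n * z^n))"
proof -
  have "summable (\<lambda>n. taylor_coeff F n * (of_real (norm z + 1))^n)"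
    using entire_taylor_series_sums[OF assms] by (rule sums_summable)
  then show ?thesis by (rule powser_insidea) simp
qed

lemma cmod_sum_cis_squared:
  fixes b :: "nat \<Rightarrow> complex"
  shows "(cmod (\<Sum>n<N. b n * cis (real n * t)))\<^sup>2 =
    (\<Sum>m<N. \<Sum>n<N. Re (b m * cnj (b n)) * cos (real_of_int (int m - int n) * t)
       - Im (b m * cnj (b n)) * sin (real_of_int (int m - int n) * t))"
proof -
  let ?S = "\<Sum>n<N. b n * cis (real n * t)"
  have "cnj ?S = (\<Sum>n<N. cnj (b n) * cis (- (real n * t)))" by (simp add: cnj_sum cis_cnj)
  then have "?S * cnj ?S = (\<Sum>m<N. \<Sum>n<N. (b m * cis (real m * t)) * (cnj (b n) * cis (- (real n * t))))"
    by (simp add: sum_product)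
  also have "\<dots> = (\<Sum>m<N. \<Sum>n<N. (b m * cnj (b n)) * cis (real_of_int (int m - int n) * t))"
    by (intro sum.cong refl) (simp add: cis_mult algebra_simps)
  finally have "?S * cnj ?S = \<dots>" .
  moreover have "(cmod ?S)\<^sup>2 = Re (?S * cnj ?S)"
    by (metis Re_complex_of_real complex_norm_square)
  ultimately show ?thesis
    by (simp add: Re_sum cis.sel)
qed

lemma trig_poly_parseval:
  fixes b :: "nat \<Rightarrow> complex"
  shows "((\<lambda>t. (cmod (\<Sum>n<N. b n * cis (real n * t)))\<^sup>2) has_integral (2 * pi * (\<Sum>n<N. (cmod (b n))\<^sup>2))) {-pi..pi}"
proof -
  have "((\<lambda>t. \<Sum>m<N. \<Sum>n<N. Re (b m * cnj (b n)) * cos (real_of_int (int m - int n) * t)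
       - Im (b m * cnj (b n)) * sin (real_of_int (int m - int n) * t)) has_integral
     (\<Sum>m<N. \<Sum>n<N. Re (b m * cnj (b n)) * (if int m - int n = 0 then 2 * pi else 0) - Im (b m * cnj (b n)) * 0)) {-pi..pi}"
    by (intro has_integral_sum has_integral_diff has_integral_mult_right has_integral_cos_nx has_integral_sin_nx) auto
  also have "(\<Sum>m<N. \<Sum>n<N. Re (b m * cnj (b n)) * (if int m - int n = 0 then 2 * pi else 0) - Im (b m * cnj (b n)) * 0)
      = (\<Sum>m<N. \<Sum>n<N. if m = n then Re (b m * cnj (b n)) * (2 * pi) else 0)"
    by (intro sum.cong) auto
  also have "\<dots> = 2 * pi * (\<Sum>n<N. (cmod (b n))\<^sup>2)"
    by (simp add: sum_distrib_left complex_mult_cnj cmod_power2 mult.commute)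
  finally show ?thesis by (simp add: cmod_sum_cis_squared)
qed

lemma entire_circle_parseval:
  assumes F: "F holomorphic_on UNIV" and r: "r \<ge> 0"
  shows "(\<lambda>n. (cmod (taylor_coeff F n))\<^sup>2 * r^(2*n)) sums (integral {-pi..pi} (\<lambda>t. (cmod (F (r * cis t)))\<^sup>2) / (2 * pi))"
    and "(\<lambda>t. (cmod (F (r * cis t)))\<^sup>2) integrable_on {-pi..pi}"
proof -
  define b where "b n = taylor_coeff F n * of_real r ^ n" for n
  define g where "g N t = (cmod (\<Sum>n<N. b n * cis (real n * t)))\<^sup>2" for N t
  define B where "B = (\<Sum>n. norm (taylor_coeff F n * (of_real r :: complex)^n))"
  have partial_sum: "(\<Sum>n<N. b n * cis (real n * t)) = (\<Sum>n<N. taylor_coeff F n * (r * cis t)^n)" for N t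
    by (simp add: b_def power_mult_distrib Complex.DeMoivre mult.assoc)
  have g_integrable: "g N integrable_on {-pi..pi}" for N
    using trig_poly_parseval[of b N] unfolding g_def by blast
  have g_lim: "(\<lambda>N. g N t) \<longlonglongrightarrow> (cmod (F (r * cis t)))\<^sup>2" for t
    using entire_taylor_series_sums[OF F, of "r * cis t"]
    unfolding g_def partial_sum sums_def by (intro tendsto_intros)
  have g_bound: "norm (g N t) \<le> B\<^sup>2" for N t
  proof -
    have "cmod (\<Sum>n<N. b n * cis (real n * t)) \<le> (\<Sum>n<N. norm (taylor_coeff F n * (of_real r :: complex)^n))"
      using norm_sum[of "\<lambda>n. b n * cis (real n * t)"] by (simp add: b_def norm_mult)
    also have "\<dots> \<le> B"
      unfolding B_def by (intro sum_le_suminf entire_taylor_series_abs_summable[OF F]) auto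
    finally show ?thesis unfolding g_def by (simp add: power_mono)
  qed
  note limit = dominated_convergence[OF g_integrable integrable_const_ivl g_bound g_lim]
  then show "(\<lambda>t. (cmod (F (r * cis t)))\<^sup>2) integrable_on {-pi..pi}" by blast
  have "integral {-pi..pi} (g N) / (2 * pi) = (\<Sum>n<N. (cmod (taylor_coeff F n))\<^sup>2 * r^(2*n))" for N
    using trig_poly_parseval[of b N] r unfolding g_def
    by (simp add: integral_unique b_def norm_mult norm_power power_mult_distrib power_mult mult.commute)
  moreover have "(\<lambda>N. integral {-pi..pi} (g N) / (2 * pi)) \<longlonglongrightarrow> integral {-pi..pi} (\<lambda>t. (cmod (F (r * cis t)))\<^sup>2) / (2 * pi)"
    using limit by (intro tendsto_divide tendsto_const) auto
  ultimately show "(\<lambda>n. (cmod (taylor_coeff F n))\<^sup>2 * r^(2*n)) sums (integral {-pi..pi} (\<lambda>t. (cmod (F (r * cis t)))\<^sup>2) / (2 * pi))"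
    unfolding sums_def by simp
qed

section \<open>Uniqueness of finite Borel measures on the complex plane\<close>

lemma char_density_const:
  fixes M :: "real measure"
  assumes "sets M = sets borel" "c \<ge> 0"
  shows "char (density M (\<lambda>_. ennreal c)) t = c *\<^sub>R char M t"
  unfolding char_def using assms
  by (subst integral_density) (auto simp: measurable_cong_sets[OF assms(1) refl])

lemma finite_measure_eq_if_char_eq:
  fixes M1 M2 :: "real measure"
  assumes fin: "finite_measure M1" "finite_measure M2"
    and sets: "sets M1 = sets borel" "sets M2 = sets borel"
    and char_eq: "char M1 = char M2"
  shows "M1 = M2"
proof -
  have space: "space M1 = UNIV" "space M2 = UNIV"
    using sets_eq_imp_space_eq[OF sets(1)] sets_eq_imp_space_eq[OF sets(2)] by auto
  define m where "m = measure M1 UNIV"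
  have "char M1 0 = m" "char M2 0 = measure M2 UNIV"
    by (simp_all add: char_def space m_def scaleR_conv_of_real)
  then have m2: "measure M2 UNIV = m" using char_eq by simp
  have emeasure_UNIV: "emeasure M1 UNIV = m" "emeasure M2 UNIV = m"
    using finite_measure.emeasure_eq_measure[OF fin(1)] finite_measure.emeasure_eq_measure[OF fin(2)]
    by (simp_all add: m_def m2)
  show ?thesis
  proof (cases "m = 0")
    case True
    show ?thesis
    proof (rule measure_eqI)
      fix A assume "A \<in> sets M1"
      have "emeasure M1 A = 0" "emeasure M2 A = 0"
        using emeasure_space[of M1 A] emeasure_space[of M2 A] emeasure_UNIV True space by auto
      then show "emeasure M1 A = emeasure M2 A" by simp
    qed (use sets in simp)
  next
    case False
    then have "m > 0" using measure_nonneg[of M1 UNIV] unfolding m_def by linarith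
    define N1 where "N1 = density M1 (\<lambda>_. ennreal (1 / m))"
    define N2 where "N2 = density M2 (\<lambda>_. ennreal (1 / m))"
    have "real_distribution N" if "N = density M (\<lambda>_. ennreal (1 / m))" "sets M = sets borel"
      "space M = UNIV" "emeasure M UNIV = m" for M N
    proof -
      have "prob_space N"
        using \<open>m > 0\<close> that by (intro prob_spaceI) (simp add: emeasure_density_const flip: ennreal_mult)
      then show ?thesis using that unfolding real_distribution_def real_distribution_axioms_def by simp
    qed
    then have "real_distribution N1" "real_distribution N2"
      using sets space emeasure_UNIV by (simp_all add: N1_def N2_def)
    moreover have "char N1 = char N2"
      using \<open>m > 0\<close> char_eq by (simp add: N1_def N2_def sets char_density_const fun_eq_iff)
    ultimately have "N1 = N2" by (rule Levy_uniqueness)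
    have "M = density (density M (\<lambda>_. ennreal (1 / m))) (\<lambda>_. ennreal m)" for M :: "real measure"
      using \<open>m > 0\<close> by (simp add: density_density_eq flip: ennreal_mult density_1)
    then show ?thesis using \<open>N1 = N2\<close> unfolding N1_def N2_def by metis
  qed
qed

lemma char_distr_density:
  fixes g h :: "'a \<Rightarrow> real"
  assumes "g \<in> borel_measurable M" "h \<in> borel_measurable M" "\<And>x. 0 \<le> g x"
  shows "char (distr (density M (\<lambda>x. ennreal (g x))) borel h) t = (CLINT x|M. g x *\<^sub>R iexp (t * h x))"
  unfolding char_def using assms by (simp add: integral_distr integral_density)

lemma integral_weighted_indicator_eq_if_char_eq:
  fixes \<nu>1 \<nu>2 :: "'a measure" and g h :: "'a \<Rightarrow> real"
  assumes fin: "finite_measure \<nu>1" "finite_measure \<nu>2" and sets: "sets \<nu>1 = sets \<nu>2"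
    and meas: "g \<in> borel_measurable \<nu>1" "h \<in> borel_measurable \<nu>1"
    and g: "\<And>x. 0 \<le> g x" "\<And>x. g x \<le> K"
    and char_eq: "\<And>t. (CLINT x|\<nu>1. g x *\<^sub>R iexp (t * h x)) = (CLINT x|\<nu>2. g x *\<^sub>R iexp (t * h x))"
    and B: "B \<in> sets borel"
  shows "(LINT x|\<nu>1. g x * indicator B (h x)) = (LINT x|\<nu>2. g x * indicator B (h x))"
proof -
  have meas2: "g \<in> borel_measurable \<nu>2" "h \<in> borel_measurable \<nu>2"
    using meas by (simp_all add: measurable_cong_sets[OF sets refl])
  have finite: "finite_measure (distr (density \<nu> (\<lambda>x. ennreal (g x))) borel h)"
    if "finite_measure \<nu>" "g \<in> borel_measurable \<nu>" "h \<in> borel_measurable \<nu>" for \<nu>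
  proof (intro finite_measure.finite_measure_distr finite_measureI)
    have "emeasure (density \<nu> (\<lambda>x. ennreal (g x))) (space \<nu>) = (\<integral>\<^sup>+x. ennreal (g x) \<partial>\<nu>)"
      using that by (simp add: emeasure_density nn_integral_restrict_space[symmetric] cong: nn_integral_cong_simp)
    also have "\<dots> \<le> (\<integral>\<^sup>+x. ennreal K \<partial>\<nu>)"
      using g by (intro nn_integral_mono ennreal_leI) auto
    also have "\<dots> < \<infinity>"
      using finite_measure.emeasure_finite[OF that(1)] by (simp add: ennreal_mult_less_top top.not_eq_extremum)
    finally show "emeasure (density \<nu> (\<lambda>x. ennreal (g x))) (space (density \<nu> (\<lambda>x. ennreal (g x)))) \<noteq> \<infinity>"
      by simp
  qed (use that in simp)
  have "distr (density \<nu>1 (\<lambda>x. ennreal (g x))) borel h = distr (density \<nu>2 (\<lambda>x. ennreal (g x))) borel h"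
    using finite[OF fin(1) meas] finite[OF fin(2) meas2] char_eq
    by (intro finite_measure_eq_if_char_eq) (simp_all add: char_distr_density meas meas2 g fun_eq_iff)
  moreover have "(LINT y|distr (density \<nu> (\<lambda>x. ennreal (g x))) borel h. indicator B y)
      = (LINT x|\<nu>. g x * indicator B (h x))"
    if "g \<in> borel_measurable \<nu>" "h \<in> borel_measurable \<nu>" for \<nu>
    using that B g by (subst integral_distr) (auto simp: integral_density)
  ultimately show ?thesis using meas meas2 by metis
qed

lemma integral_signed_weighted_indicator_eq_if_char_eq:
  fixes \<nu>1 \<nu>2 :: "'a measure" and f h :: "'a \<Rightarrow> real"
  assumes fin: "finite_measure \<nu>1" "finite_measure \<nu>2" and sets: "sets \<nu>1 = sets \<nu>2"
    and meas: "f \<in> borel_measurable \<nu>1" "h \<in> borel_measurable \<nu>1"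
    and f: "\<And>x. \<bar>f x\<bar> \<le> K"
    and char_eq: "\<And>t. (CLINT x|\<nu>1. iexp (t * h x)) = (CLINT x|\<nu>2. iexp (t * h x))"
    and weighted_char_eq: "\<And>t. (CLINT x|\<nu>1. f x *\<^sub>R iexp (t * h x)) = (CLINT x|\<nu>2. f x *\<^sub>R iexp (t * h x))"
    and B: "B \<in> sets borel"
  shows "(LINT x|\<nu>1. f x * indicator B (h x)) = (LINT x|\<nu>2. f x * indicator B (h x))"
proof -
  have meas2: "f \<in> borel_measurable \<nu>2" "h \<in> borel_measurable \<nu>2"
    using meas by (simp_all add: measurable_cong_sets[OF sets refl])
  have "0 \<le> K" using abs_ge_zero f order_trans by blast
  have integral_shift:
    "(CLINT x|\<nu>. (K + f x) *\<^sub>R iexp (t * h x)) = K *\<^sub>R (CLINT x|\<nu>. iexp (t * h x)) + (CLINT x|\<nu>. f x *\<^sub>R iexp (t * h x))"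
    "(LINT x|\<nu>. (K + f x) * indicator B (h x)) = K * (LINT x|\<nu>. indicator B (h x)) + (LINT x|\<nu>. f x * indicator B (h x))"
    if "finite_measure \<nu>" "f \<in> borel_measurable \<nu>" "h \<in> borel_measurable \<nu>" for \<nu> t
  proof -
    have "complex_integrable \<nu> (\<lambda>x. iexp (t * h x))" "integrable \<nu> (\<lambda>x. indicator B (h x) :: real)"
      using that B by (auto intro!: finite_measure.integrable_const_bound[where B=1] simp: indicator_def)
    moreover have "complex_integrable \<nu> (\<lambda>x. f x *\<^sub>R iexp (t * h x))" "integrable \<nu> (\<lambda>x. f x * indicator B (h x))"
      using that B f \<open>0 \<le> K\<close> by (auto intro!: finite_measure.integrable_const_bound[where B=K] simp: norm_mult indicator_def)
    ultimately show "(CLINT x|\<nu>. (K + f x) *\<^sub>R iexp (t * h x)) = K *\<^sub>R (CLINT x|\<nu>. iexp (t * h x)) + (CLINT x|\<nu>. f x *\<^sub>R iexp (t * h x))"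
      "(LINT x|\<nu>. (K + f x) * indicator B (h x)) = K * (LINT x|\<nu>. indicator B (h x)) + (LINT x|\<nu>. f x * indicator B (h x))"
      by (simp_all add: scaleR_add_left distrib_right)
  qed
  \<comment> \<open>Levy's theorem needs a nonnegative weight: apply it to the weights \<open>1\<close> and \<open>K + f\<close>.\<close>
  have "(LINT x|\<nu>1. indicator B (h x)) = (LINT x|\<nu>2. indicator B (h x) :: real)"
    using integral_weighted_indicator_eq_if_char_eq[where g="\<lambda>_. 1" and K=1, OF fin sets _ meas(2) _ _ _ B]
      char_eq by simp
  moreover have "(LINT x|\<nu>1. (K + f x) * indicator B (h x)) = (LINT x|\<nu>2. (K + f x) * indicator B (h x))"
  proof (rule integral_weighted_indicator_eq_if_char_eq[OF fin sets _ meas(2), where K="2 * K"])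
    show "(\<lambda>x. K + f x) \<in> borel_measurable \<nu>1" using meas by simp
    show "0 \<le> K + f x" "K + f x \<le> 2 * K" for x using f[of x] by auto
    show "(CLINT x|\<nu>1. (K + f x) *\<^sub>R iexp (t * h x)) = (CLINT x|\<nu>2. (K + f x) *\<^sub>R iexp (t * h x))" for t
      by (simp only: integral_shift[OF fin(1) meas] integral_shift[OF fin(2) meas2] char_eq weighted_char_eq)
  qed (rule B)
  ultimately show ?thesis by (simp add: integral_shift[OF fin(1) meas] integral_shift[OF fin(2) meas2])
qed

lemma cos_scaleR_iexp: "cos x *\<^sub>R iexp y = (iexp (x + y) + iexp (- x + y)) / 2"
  by (simp add: cos_exp_eq scaleR_conv_of_real cos_of_real[symmetric] distrib_left exp_add exp_diff exp_minus_inverse field_simps)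

lemma sin_scaleR_iexp: "sin x *\<^sub>R iexp y = (iexp (x + y) - iexp (- x + y)) / (2 * \<i>)"
  by (simp add: sin_exp_eq scaleR_conv_of_real sin_of_real[symmetric] distrib_left exp_add exp_diff exp_minus_inverse field_simps)

definition char_complex :: "complex measure \<Rightarrow> complex \<Rightarrow> complex" where
  "char_complex M w = (CLINT z|M. iexp (w \<bullet> z))"

lemma char_Re_on_strip_eq_if_char_complex_eq:
  fixes \<nu>1 \<nu>2 :: "complex measure"
  assumes fin: "finite_measure \<nu>1" "finite_measure \<nu>2"
    and sets: "sets \<nu>1 = sets borel" "sets \<nu>2 = sets borel"
    and char_eq: "char_complex \<nu>1 = char_complex \<nu>2" and B: "B \<in> sets borel"
  shows "(CLINT z|\<nu>1. indicator B (Im z) *\<^sub>R iexp (s * Re z)) = (CLINT z|\<nu>2. indicator B (Im z) *\<^sub>R iexp (s * Re z))"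
proof -
  have char_slices:
    "(CLINT z|\<nu>. iexp (t * Im z)) = char_complex \<nu> (Complex 0 t)"
    "(CLINT z|\<nu>. cos (s * Re z) *\<^sub>R iexp (t * Im z)) = (char_complex \<nu> (Complex s t) + char_complex \<nu> (Complex (-s) t)) / 2"
    "(CLINT z|\<nu>. sin (s * Re z) *\<^sub>R iexp (t * Im z)) = (char_complex \<nu> (Complex s t) - char_complex \<nu> (Complex (-s) t)) / (2 * \<i>)"
    if "finite_measure \<nu>" "sets \<nu> = sets borel" for \<nu> t
  proof -
    note [measurable_cong] = that(2)
    have "complex_integrable \<nu> (\<lambda>z. iexp (w \<bullet> z))" for w
      using that by (intro finite_measure.integrable_const_bound[where B=1]) (auto simp: norm_exp_i_times)
    moreover have
      "iexp (t * Im z) = iexp (Complex 0 t \<bullet> z)"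
      "cos (s * Re z) *\<^sub>R iexp (t * Im z) = (iexp (Complex s t \<bullet> z) + iexp (Complex (-s) t \<bullet> z)) / 2"
      "sin (s * Re z) *\<^sub>R iexp (t * Im z) = (iexp (Complex s t \<bullet> z) - iexp (Complex (-s) t \<bullet> z)) / (2 * \<i>)" for z
      by (simp_all only: cos_scaleR_iexp sin_scaleR_iexp) (simp_all add: inner_complex_def)
    ultimately show
      "(CLINT z|\<nu>. iexp (t * Im z)) = char_complex \<nu> (Complex 0 t)"
      "(CLINT z|\<nu>. cos (s * Re z) *\<^sub>R iexp (t * Im z)) = (char_complex \<nu> (Complex s t) + char_complex \<nu> (Complex (-s) t)) / 2"
      "(CLINT z|\<nu>. sin (s * Re z) *\<^sub>R iexp (t * Im z)) = (char_complex \<nu> (Complex s t) - char_complex \<nu> (Complex (-s) t)) / (2 * \<i>)"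
      by (simp_all only: char_complex_def) (simp_all add: integral_diff integral_add)
  qed
  have slices_eq:
    "(CLINT z|\<nu>1. iexp (t * Im z)) = (CLINT z|\<nu>2. iexp (t * Im z))"
    "(CLINT z|\<nu>1. cos (s * Re z) *\<^sub>R iexp (t * Im z)) = (CLINT z|\<nu>2. cos (s * Re z) *\<^sub>R iexp (t * Im z))"
    "(CLINT z|\<nu>1. sin (s * Re z) *\<^sub>R iexp (t * Im z)) = (CLINT z|\<nu>2. sin (s * Re z) *\<^sub>R iexp (t * Im z))" for t
    by (simp_all only: char_slices[OF fin(1) sets(1)] char_slices[OF fin(2) sets(2)] char_eq)
  have "(LINT z|\<nu>1. cos (s * Re z) * indicator B (Im z)) = (LINT z|\<nu>2. cos (s * Re z) * indicator B (Im z))"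
    by (rule integral_signed_weighted_indicator_eq_if_char_eq[OF fin _ _ _ _ slices_eq(1,2) B, where K=1])
      (auto simp: sets measurable_cong_sets[OF sets(1) refl])
  moreover have "(LINT z|\<nu>1. sin (s * Re z) * indicator B (Im z)) = (LINT z|\<nu>2. sin (s * Re z) * indicator B (Im z))"
    by (rule integral_signed_weighted_indicator_eq_if_char_eq[OF fin _ _ _ _ slices_eq(1,3) B, where K=1])
      (auto simp: sets measurable_cong_sets[OF sets(1) refl])
  moreover have "complex_integrable \<nu> (\<lambda>z. indicator B (Im z) *\<^sub>R iexp (s * Re z))"
    if "finite_measure \<nu>" "sets \<nu> = sets borel" for \<nu>
    using that B by (intro finite_measure.integrable_const_bound[where B=1])
      (auto simp: norm_exp_i_times indicator_def measurable_cong_sets[OF that(2) refl])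
  ultimately show ?thesis
    using fin sets by (intro complex_eqI) (simp_all flip: integral_Re integral_Im add: Re_exp Im_exp mult.commute)
qed

lemma complex_finite_measure_eqI_rectangles:
  fixes \<nu>1 \<nu>2 :: "complex measure"
  assumes fin: "finite_measure \<nu>1" "finite_measure \<nu>2"
    and sets: "sets \<nu>1 = sets borel" "sets \<nu>2 = sets borel"
    and rect_eq: "\<And>A B. A \<in> sets borel \<Longrightarrow> B \<in> sets borel \<Longrightarrow>
      measure \<nu>1 {z. Re z \<in> A \<and> Im z \<in> B} = measure \<nu>2 {z. Re z \<in> A \<and> Im z \<in> B}"
  shows "\<nu>1 = \<nu>2"
proof -
  define rect :: "real set \<times> real set \<Rightarrow> complex set" where "rect = (\<lambda>(A, B). {z. Re z \<in> A \<and> Im z \<in> B})"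
  define E where "E = rect ` (sets borel \<times> sets borel)"
  have E_borel: "E \<subseteq> sets borel"
    by (auto simp: E_def rect_def)
  have box: "box a b = rect ({Re a<..<Re b}, {Im a<..<Im b})" for a b
    by (simp add: rect_def box_complex_eq)
  have sets_E: "sets borel = sigma_sets UNIV E"
  proof
    have "sigma_sets UNIV (range (\<lambda>(a, b). box a b :: complex set)) \<subseteq> sigma_sets UNIV E"
      by (intro sigma_sets_mono') (auto simp: box E_def)
    then show "sets borel \<subseteq> sigma_sets UNIV E"
      by (subst borel_eq_box) (simp add: sets_measure_of)
    show "sigma_sets UNIV E \<subseteq> sets borel"
      using sets.sigma_sets_subset[OF E_borel] by simp
  qed
  show ?thesis
  proof (rule measure_eqI_generator_eq[where E=E and \<Omega>=UNIV and A="\<lambda>_. UNIV"])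
    show "Int_stable E" unfolding E_def
    proof (rule Int_stableI_image)
      fix i j :: "real set \<times> real set" assume "i \<in> sets borel \<times> sets borel" "j \<in> sets borel \<times> sets borel"
      then show "\<exists>k\<in>sets borel \<times> sets borel. rect i \<inter> rect j = rect k"
        by (intro bexI[of _ "(fst i \<inter> fst j, snd i \<inter> snd j)"]) (auto simp: rect_def split: prod.splits)
    qed
    show "emeasure \<nu>1 X = emeasure \<nu>2 X" if "X \<in> E" for X
      using that rect_eq finite_measure.emeasure_eq_measure[OF fin(1)] finite_measure.emeasure_eq_measure[OF fin(2)]
      by (auto simp: E_def rect_def)
    show "range (\<lambda>_. UNIV) \<subseteq> E"
      by (auto simp: E_def rect_def intro!: image_eqI[of _ _ "(UNIV, UNIV)"])
    show "emeasure \<nu>1 UNIV \<noteq> \<infinity>"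
      using finite_measure.emeasure_finite[OF fin(1)] sets_eq_imp_space_eq[OF sets(1)] by simp
  qed (use sets sets_E in auto)
qed

lemma complex_measure_eq_if_char_complex_eq:
  fixes \<nu>1 \<nu>2 :: "complex measure"
  assumes fin: "finite_measure \<nu>1" "finite_measure \<nu>2"
    and sets: "sets \<nu>1 = sets borel" "sets \<nu>2 = sets borel"
    and char_eq: "char_complex \<nu>1 = char_complex \<nu>2"
  shows "\<nu>1 = \<nu>2"
proof (rule complex_finite_measure_eqI_rectangles[OF fin sets])
  fix A B :: "real set" assume A: "A \<in> sets borel" and B: "B \<in> sets borel"
  have char_Re: "(CLINT z|\<nu>1. iexp (t * Re z)) = (CLINT z|\<nu>2. iexp (t * Re z))" for t
    using fun_cong[OF char_eq, of "Complex t 0"] by (simp add: char_complex_def inner_complex_def)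
  have "(LINT z|\<nu>1. indicator B (Im z) * indicator A (Re z)) = (LINT z|\<nu>2. indicator B (Im z) * indicator A (Re z) :: real)"
    by (rule integral_signed_weighted_indicator_eq_if_char_eq[OF fin _ _ _ _ char_Re
          char_Re_on_strip_eq_if_char_complex_eq[OF fin sets char_eq B] A, where K=1])
      (use B in \<open>auto simp: sets measurable_cong_sets[OF sets(1) refl] indicator_def\<close>)
  moreover have "(LINT z|\<nu>. indicator B (Im z) * indicator A (Re z) :: real) = measure \<nu> {z. Re z \<in> A \<and> Im z \<in> B}"
    if "finite_measure \<nu>" "sets \<nu> = sets borel" for \<nu>
  proof -
    have "(\<lambda>z. indicator B (Im z) * indicator A (Re z) :: real) = indicator {z. Re z \<in> A \<and> Im z \<in> B}"
      by (auto simp: fun_eq_iff indicator_def)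
    moreover have "{z. Re z \<in> A \<and> Im z \<in> B} \<in> sets \<nu>" using that A B by auto
    ultimately show ?thesis
      using that by (simp add: finite_measure.emeasure_finite)
  qed
  ultimately show "measure \<nu>1 {z. Re z \<in> A \<and> Im z \<in> B} = measure \<nu>2 {z. Re z \<in> A \<and> Im z \<in> B}"
    using fin sets by simp
qed

definition represents_H_lambda :: "(nat \<Rightarrow> real) \<Rightarrow> complex measure \<Rightarrow> bool" where
  "represents_H_lambda lam \<mu> \<longleftrightarrow> sets \<mu> = sets borel \<and>
    (\<forall>F. F holomorphic_on UNIV \<longrightarrow>
       ((in_H_lambda lam F \<longleftrightarrow> integrable \<mu> (\<lambda>z. (cmod (F z))\<^sup>2)) \<and>
        (in_H_lambda lam F \<longrightarrow> H_lambda_norm_sq lam F = (\<integral>z. (cmod (F z))\<^sup>2 \<partial>\<mu>))))"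

lemma borel_measurable_holomorphic:
  "F holomorphic_on UNIV \<Longrightarrow> F \<in> borel_measurable borel"
  by (intro borel_measurable_continuous_onI holomorphic_on_imp_continuous_on)

lemma represents_H_lambdaI:
  assumes sets: "sets \<mu> = sets borel" and lam: "\<And>n. lam n \<ge> 0"
    and nn_integral: "\<And>F. F holomorphic_on UNIV \<Longrightarrow>
      (\<integral>\<^sup>+z. ennreal ((cmod (F z))\<^sup>2) \<partial>\<mu>) = (\<Sum>n. ennreal (lam n * (cmod (taylor_coeff F n))\<^sup>2))"
  shows "represents_H_lambda lam \<mu>"
  unfolding represents_H_lambda_def
proof (intro conjI allI impI sets)
  fix F :: "complex \<Rightarrow> complex" assume F: "F holomorphic_on UNIV"
  define x where "x = (\<lambda>n. lam n * (cmod (taylor_coeff F n))\<^sup>2)"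
  have x: "0 \<le> x n" for n using lam by (simp add: x_def)
  have meas: "(\<lambda>z. (cmod (F z))\<^sup>2) \<in> borel_measurable \<mu>"
    using borel_measurable_holomorphic[OF F] by (simp add: measurable_cong_sets[OF sets refl])
  have "integrable \<mu> (\<lambda>z. (cmod (F z))\<^sup>2) \<longleftrightarrow> (\<Sum>n. ennreal (x n)) < \<infinity>"
    using meas by (simp add: integrable_iff_bounded nn_integral[OF F] x_def)
  also have "\<dots> \<longleftrightarrow> summable x"
    using summable_suminf_not_top[OF x] suminf_ennreal2[OF x] by (auto simp: less_top)
  finally show "in_H_lambda lam F \<longleftrightarrow> integrable \<mu> (\<lambda>z. (cmod (F z))\<^sup>2)"
    using F by (simp add: in_H_lambda_def x_def)
  assume "in_H_lambda lam F"
  then have "summable x" by (simp add: in_H_lambda_def x_def)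
  have "(\<integral>z. (cmod (F z))\<^sup>2 \<partial>\<mu>) = enn2real (\<integral>\<^sup>+z. ennreal ((cmod (F z))\<^sup>2) \<partial>\<mu>)"
    using meas by (intro integral_eq_nn_integral) auto
  also have "\<dots> = (\<Sum>n. x n)"
    using suminf_ennreal2[OF x \<open>summable x\<close>] suminf_nonneg[OF \<open>summable x\<close> x] by (simp add: nn_integral[OF F] x_def)
  finally show "H_lambda_norm_sq lam F = (\<integral>z. (cmod (F z))\<^sup>2 \<partial>\<mu>)"
    by (simp add: H_lambda_norm_sq_def x_def)
qed

lemma represents_H_lambdaD:
  assumes "represents_H_lambda lam \<mu>" "in_H_lambda lam F"
  shows "integrable \<mu> (\<lambda>z. (cmod (F z))\<^sup>2)" "H_lambda_norm_sq lam F = (\<integral>z. (cmod (F z))\<^sup>2 \<partial>\<mu>)"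
proof -
  have "F holomorphic_on UNIV" using assms(2) by (simp add: in_H_lambda_def)
  moreover have "F holomorphic_on UNIV \<longrightarrow> (in_H_lambda lam F \<longleftrightarrow> integrable \<mu> (\<lambda>z. (cmod (F z))\<^sup>2)) \<and>
      (in_H_lambda lam F \<longrightarrow> H_lambda_norm_sq lam F = (\<integral>z. (cmod (F z))\<^sup>2 \<partial>\<mu>))"
    using assms(1) unfolding represents_H_lambda_def by (elim conjE allE)
  ultimately show "integrable \<mu> (\<lambda>z. (cmod (F z))\<^sup>2)" "H_lambda_norm_sq lam F = (\<integral>z. (cmod (F z))\<^sup>2 \<partial>\<mu>)"
    using assms(2) by simp_all
qed

section \<open>Existence\<close>

definition polar_density :: "real \<times> real \<Rightarrow> ennreal" where
  "polar_density x = ennreal (exp (- fst x) / (2 * pi)) * indicator ({0..} \<times> {-pi..pi}) x"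

definition polar_point :: "real \<Rightarrow> real \<times> real \<Rightarrow> complex" where
  "polar_point a x = sqrt (a * fst x) * cis (snd x)"

definition fock_measure :: "real \<Rightarrow> complex measure" where
  "fock_measure a = distr (density (lborel \<Otimes>\<^sub>M lborel) polar_density) borel (polar_point a)"

lemma sets_fock_measure [simp, measurable_cong]: "sets (fock_measure a) = sets borel"
  by (simp add: fock_measure_def)

lemma borel_measurable_cis [measurable]: "(\<lambda>t. cis t) \<in> borel_measurable borel"
  unfolding cis_conv_exp by measurable

lemma nn_integral_polar_circle:
  assumes a: "a > 0" and F: "F holomorphic_on UNIV"
  shows "(\<integral>\<^sup>+t. polar_density (s, t) * ennreal ((cmod (F (polar_point a (s, t))))\<^sup>2) \<partial>lborel) =
     (\<Sum>n. ennreal ((cmod (taylor_coeff F n))\<^sup>2 * a^n) * (ennreal (s^n * exp (-s)) * indicator {0..} s))"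
proof (cases "s \<ge> 0")
  case False
  then show ?thesis by (simp add: polar_density_def indicator_def)
next
  case True
  have [measurable]: "F \<in> borel_measurable borel" by (rule borel_measurable_holomorphic[OF F])
  define r where "r = sqrt (a * s)"
  define c where "c = (\<lambda>n. (cmod (taylor_coeff F n))\<^sup>2 * a^n * s^n)"
  have "r \<ge> 0" using a True by (simp add: r_def)
  have "c = (\<lambda>n. (cmod (taylor_coeff F n))\<^sup>2 * r^(2*n))"
    using a True by (simp add: fun_eq_iff c_def r_def power_mult power_mult_distrib mult.assoc)
  then have parseval: "c sums (integral {-pi..pi} (\<lambda>t. (cmod (F (r * cis t)))\<^sup>2) / (2 * pi))"
    "(\<lambda>t. (cmod (F (r * cis t)))\<^sup>2) integrable_on {-pi..pi}"
    using entire_circle_parseval[OF F \<open>r \<ge> 0\<close>] by simp_all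
  have "(\<integral>\<^sup>+t. polar_density (s, t) * ennreal ((cmod (F (polar_point a (s, t))))\<^sup>2) \<partial>lborel)
      = ennreal (exp (- s) / (2 * pi)) * (\<integral>\<^sup>+t. ennreal (indicator {-pi..pi} t * (cmod (F (r * cis t)))\<^sup>2) \<partial>lborel)"
    using True
    by (subst nn_integral_cmult[symmetric]) (auto intro!: nn_integral_cong simp: polar_density_def polar_point_def r_def indicator_def)
  also have "(\<integral>\<^sup>+t. ennreal (indicator {-pi..pi} t * (cmod (F (r * cis t)))\<^sup>2) \<partial>lborel)
      = ennreal (integral {-pi..pi} (\<lambda>t. (cmod (F (r * cis t)))\<^sup>2))"
    using parseval(2) by (intro nn_integral_has_integral_lebesgue) auto
  also have "ennreal (exp (- s) / (2 * pi)) * \<dots>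
      = ennreal (exp (- s) * (integral {-pi..pi} (\<lambda>t. (cmod (F (r * cis t)))\<^sup>2) / (2 * pi)))"
    by (subst ennreal_mult'[symmetric]) auto
  also have "\<dots> = ennreal (\<Sum>n. exp (- s) * c n)"
    by (simp add: sums_unique[OF parseval(1), symmetric] suminf_mult[OF sums_summable[OF parseval(1)]])
  also have "\<dots> = (\<Sum>n. ennreal (exp (- s) * c n))"
    using a True sums_summable[OF parseval(1)] by (intro suminf_ennreal2[symmetric] summable_mult) (auto simp: c_def)
  also have "\<dots> = (\<Sum>n. ennreal ((cmod (taylor_coeff F n))\<^sup>2 * a^n) * (ennreal (s^n * exp (-s)) * indicator {0..} s))"
    using a True by (intro suminf_cong) (simp add: c_def ennreal_mult'' mult_ac)
  finally show ?thesis .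
qed

lemma nn_integral_fock_measure:
  assumes a: "a > 0" and F: "F holomorphic_on UNIV"
  shows "(\<integral>\<^sup>+z. ennreal ((cmod (F z))\<^sup>2) \<partial>fock_measure a) =
     (\<Sum>n. ennreal (lambda_seq a n * (cmod (taylor_coeff F n))\<^sup>2))"
proof -
  have [measurable]: "F \<in> borel_measurable borel" by (rule borel_measurable_holomorphic[OF F])
  have [measurable]: "polar_point a \<in> borel_measurable (lborel \<Otimes>\<^sub>M lborel)" "polar_density \<in> borel_measurable (lborel \<Otimes>\<^sub>M lborel)"
    unfolding polar_point_def polar_density_def by measurable
  have "(\<integral>\<^sup>+z. ennreal ((cmod (F z))\<^sup>2) \<partial>fock_measure a)
      = (\<integral>\<^sup>+x. polar_density x * ennreal ((cmod (F (polar_point a x)))\<^sup>2) \<partial>(lborel \<Otimes>\<^sub>M lborel))"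
    unfolding fock_measure_def by (simp add: nn_integral_distr nn_integral_density)
  also have "\<dots> = (\<integral>\<^sup>+s. \<integral>\<^sup>+t. polar_density (s, t) * ennreal ((cmod (F (polar_point a (s, t))))\<^sup>2) \<partial>lborel \<partial>lborel)"
    by (rule lborel.nn_integral_fst[symmetric]) measurable
  also have "\<dots> = (\<Sum>n. \<integral>\<^sup>+s. ennreal ((cmod (taylor_coeff F n))\<^sup>2 * a^n) * (ennreal (s^n * exp (-s)) * indicator {0..} s) \<partial>lborel)"
    by (simp add: nn_integral_polar_circle[OF a F] nn_integral_suminf)
  also have "\<dots> = (\<Sum>n. ennreal ((cmod (taylor_coeff F n))\<^sup>2 * a^n) * ennreal (fact n))"
    by (subst nn_integral_cmult) (auto simp: nn_intergal_power_times_exp_Ici)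
  also have "\<dots> = (\<Sum>n. ennreal (lambda_seq a n * (cmod (taylor_coeff F n))\<^sup>2))"
    using a by (simp add: lambda_seq_def mult_ac flip: ennreal_mult'')
  finally show ?thesis .
qed

lemma fock_measure_represents_H_lambda:
  "a > 0 \<Longrightarrow> represents_H_lambda (lambda_seq a) (fock_measure a)"
  by (intro represents_H_lambdaI) (simp_all add: lambda_seq_def nn_integral_fock_measure)

section \<open>Uniqueness\<close>

definition exp_pair :: "complex \<Rightarrow> complex \<Rightarrow> complex \<Rightarrow> complex" where
  "exp_pair u c z = exp (u * z) + c * exp (- u * z)"

lemma higher_deriv_exp_linear: "(deriv ^^ n) (\<lambda>z. exp (w * z)) = (\<lambda>z. w^n * exp (w * z))"
proof (induction n)
  case (Suc n)
  have "deriv (\<lambda>z. w^n * exp (w * z)) z = w^Suc n * exp (w * z)" for z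
    by (rule DERIV_imp_deriv) (auto intro!: derivative_eq_intros simp: mult_ac)
  then show ?case unfolding funpow.simps comp_def Suc.IH by blast
qed simp

lemma holomorphic_exp_pair: "exp_pair u c holomorphic_on UNIV"
  unfolding exp_pair_def by (intro holomorphic_intros)

lemma taylor_coeff_exp_pair: "taylor_coeff (exp_pair u c) n = (u^n + c * (-u)^n) / fact n"
proof -
  have holo: "(\<lambda>z. exp (u * z)) holomorphic_on UNIV" "(\<lambda>z. exp (- u * z)) holomorphic_on UNIV"
    "(\<lambda>z. c * exp (- u * z)) holomorphic_on UNIV"
    by (intro holomorphic_intros)+
  have "(deriv ^^ n) (exp_pair u c) 0 = (deriv ^^ n) (\<lambda>z. exp (u * z)) 0 + (deriv ^^ n) (\<lambda>z. c * exp (- u * z)) 0"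
    unfolding exp_pair_def[abs_def] by (rule higher_deriv_add[OF holo(1,3)]) auto
  also have "(deriv ^^ n) (\<lambda>z. c * exp (- u * z)) 0 = c * (deriv ^^ n) (\<lambda>z. exp (- u * z)) 0"
    by (rule higher_deriv_cmult[OF holo(2)]) auto
  finally show ?thesis unfolding taylor_coeff_def higher_deriv_exp_linear by simp
qed

lemma in_H_lambda_exp_pair:
  assumes "a > 0"
  shows "in_H_lambda (lambda_seq a) (exp_pair u c)"
  unfolding in_H_lambda_def
proof (intro conjI holomorphic_exp_pair summable_comparison_test'[OF summable_mult[OF summable_exp]])
  fix n
  have "cmod (u^n + c * (-u)^n) \<le> (1 + cmod c) * cmod u ^ n"
    using norm_triangle_ineq[of "u^n" "c * (-u)^n"] by (simp add: norm_mult norm_power algebra_simps)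
  then have "(cmod (u^n + c * (-u)^n))\<^sup>2 \<le> ((1 + cmod c) * cmod u ^ n)\<^sup>2"
    by (intro power_mono) auto
  then have "a^n * (cmod (u^n + c * (-u)^n))\<^sup>2 / fact n \<le> a^n * ((1 + cmod c) * cmod u ^ n)\<^sup>2 / fact n"
    using assms by (intro divide_right_mono mult_left_mono) auto
  then show "norm (lambda_seq a n * (cmod (taylor_coeff (exp_pair u c) n))\<^sup>2)
      \<le> (1 + cmod c)\<^sup>2 * (inverse (fact n) * (a * (cmod u)\<^sup>2) ^ n)"
    using assms
    by (simp add: lambda_seq_def taylor_coeff_exp_pair norm_divide power_divide power_mult_distrib
        power2_eq_square field_simps)
qed

lemma complex_polarization:
  "A * cnj B = (complex_of_real ((cmod (A + B))\<^sup>2) - complex_of_real ((cmod (A - B))\<^sup>2)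
    + \<i> * complex_of_real ((cmod (A + \<i> * B))\<^sup>2) - \<i> * complex_of_real ((cmod (A - \<i> * B))\<^sup>2)) / 4"
  unfolding complex_eq_iff cmod_power2 by (simp add: power2_eq_square algebra_simps)

lemma iexp_inner_polarization:
  fixes w z :: complex
  defines "u \<equiv> \<i> * cnj w / 2"
  shows "iexp (w \<bullet> z) = (complex_of_real ((cmod (exp_pair u 1 z))\<^sup>2) - complex_of_real ((cmod (exp_pair u (-1) z))\<^sup>2)
    + \<i> * complex_of_real ((cmod (exp_pair u \<i> z))\<^sup>2) - \<i> * complex_of_real ((cmod (exp_pair u (-\<i>) z))\<^sup>2)) / 4"
proof -
  have "u * z + cnj (- u * z) = \<i> * complex_of_real (w \<bullet> z)"
    by (simp add: u_def inner_complex_def complex_eq_iff field_simps)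
  then have "iexp (w \<bullet> z) = exp (u * z) * cnj (exp (- u * z))"
    by (simp only: exp_cnj exp_add[symmetric])
  then show ?thesis
    by (simp add: complex_polarization exp_pair_def)
qed

lemma finite_measure_if_represents_H_lambda:
  assumes "a > 0" "represents_H_lambda (lambda_seq a) \<mu>"
  shows "finite_measure \<mu>"
proof -
  have "integrable \<mu> (\<lambda>z. (cmod (exp_pair 0 0 z))\<^sup>2)"
    using represents_H_lambdaD(1)[OF assms(2) in_H_lambda_exp_pair[OF assms(1)]] .
  then have "integrable \<mu> (\<lambda>_. 1 :: real)" by (simp add: exp_pair_def)
  then have "(\<integral>\<^sup>+z. ennreal (norm (1 :: real)) \<partial>\<mu>) < \<infinity>"
    by (simp only: integrable_iff_bounded)
  then show ?thesis
    by (intro finite_measureI) simp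
qed

lemma char_complex_if_represents_H_lambda:
  fixes w :: complex
  assumes "a > 0" "represents_H_lambda (lambda_seq a) \<mu>"
  defines "H \<equiv> \<lambda>c. complex_of_real (H_lambda_norm_sq (lambda_seq a) (exp_pair (\<i> * cnj w / 2) c))"
  shows "char_complex \<mu> w = (H 1 - H (-1) + \<i> * H \<i> - \<i> * H (-\<i>)) / 4"
proof -
  let ?F = "exp_pair (\<i> * cnj w / 2)"
  note represents = represents_H_lambdaD[OF assms(2) in_H_lambda_exp_pair[OF assms(1)]]
  have "char_complex \<mu> w = (CLINT z|\<mu>. (complex_of_real ((cmod (?F 1 z))\<^sup>2) - complex_of_real ((cmod (?F (-1) z))\<^sup>2)
    + \<i> * complex_of_real ((cmod (?F \<i> z))\<^sup>2) - \<i> * complex_of_real ((cmod (?F (-\<i>) z))\<^sup>2)) / 4)"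
    unfolding char_complex_def by (simp only: iexp_inner_polarization)
  also have "\<dots> = (H 1 - H (-1) + \<i> * H \<i> - \<i> * H (-\<i>)) / 4"
    using represents integrable_of_real[OF represents(1)]
    by (simp add: H_def integral_diff integral_add del: of_real_power)
  finally show ?thesis .
qed

lemma represents_H_lambda_unique:
  assumes "a > 0" "represents_H_lambda (lambda_seq a) \<mu>1" "represents_H_lambda (lambda_seq a) \<mu>2"
  shows "\<mu>1 = \<mu>2"
proof (rule complex_measure_eq_if_char_complex_eq)
  show "finite_measure \<mu>1" "finite_measure \<mu>2"
    using assms finite_measure_if_represents_H_lambda by blast+
  show "sets \<mu>1 = sets borel" "sets \<mu>2 = sets borel"
    using assms(2,3) by (simp_all add: represents_H_lambda_def)
  show "char_complex \<mu>1 = char_complex \<mu>2"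
    using assms by (simp add: fun_eq_iff char_complex_if_represents_H_lambda)
qed

theorem theorem4p8:
  fixes a :: real
  assumes "a > 0"
  shows "\<exists>!\<mu>::complex measure. sets \<mu> = sets borel \<and>
    (\<forall>F. F holomorphic_on UNIV \<longrightarrow>
       ((in_H_lambda (lambda_seq a) F \<longleftrightarrow> integrable \<mu> (\<lambda>z. (cmod (F z))\<^sup>2)) \<and>
        (in_H_lambda (lambda_seq a) F \<longrightarrow>
           H_lambda_norm_sq (lambda_seq a) F = (\<integral>z. (cmod (F z))\<^sup>2 \<partial>\<mu>))))"
  using fock_measure_represents_H_lambda[OF assms] represents_H_lambda_unique[OF assms]
  unfolding represents_H_lambda_def[symmetric] by blast

end
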